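(* Let $\Phi_0$ be a strictly plurisubharmonic quadratic form on $\mathbf{C}^n$ and let $F$ be a holomorphic quadratic form on $\mathbf{C}^{2n}$ whose fundamental matrix $\mathcal{F}$ does not have the eigenvalues $\pm2$, and such that $\mathrm{Im}\, F|_{\Lambda_{\Phi_0}} \geq 0$. Let $\kappa_F$ be the complex linear canonical transformation $\kappa_F:(1+\frac12\mathcal{F})\rho\mapsto(1-\frac12\mathcal{F})\rho$, $\rho\in\mathbf{C}^{2n}$, and let $\Phi$ be the strictly plurisubharmonic quadratic form with $\kappa_F(\Lambda_{\Phi_0})=\Lambda_\Phi$. Then $$\Lambda_{\Phi} \cap \Lambda_{\Phi_0} = \left\{\left(1-\tfrac{1}{2} \mathcal{F}\right)\rho:\ \rho \in \Lambda_{\Phi_0},\ \mathrm{Im}\, F(\rho) = 0\right\}.$$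
   Context: The fundamental matrix of $F$ is $\mathcal{F}= \begin{pmatrix}F''_{\xi x} &F''_{\xi \xi }\\ -F''_{xx} &-F''_{x\xi }\end{pmatrix}$. For a real quadratic form $\Phi$ on $\mathbf{C}^n$, $\Lambda_{\Phi} = \{(x,\frac{2}{i}\frac{\partial \Phi}{\partial x}(x)) : x\in \mathbf{C}^n\}$. Under the stated hypotheses it is known that $\kappa_F(\Lambda_{\Phi_0})$ is of the form $\Lambda_\Phi$ for a strictly plurisubharmonic quadratic form $\Phi\le\Phi_0$. *)

theory Defs
  imports "HOL-Analysis.Analysis"
begin

definition bil :: "complex^'n \<Rightarrow> complex^'n \<Rightarrow> complex" where
  "bil x y = (\<Sum>i\<in>UNIV. x$i * y$i)"

text \<open>Holomorphic quadratic form on C^{2n} with Hessian blocks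
  F''_xx = Fxx, F''_x xi = Fxxi, F''_xi xi = Fxixi (so F''_xi x = transpose Fxxi):
  F(x,xi) = (1/2) (x.Fxx x + 2 x.Fxxi xi + xi.Fxixi xi).\<close>
definition hol_quad ::
  "complex^'n^'n \<Rightarrow> complex^'n^'n \<Rightarrow> complex^'n^'n \<Rightarrow> (complex^'n) \<times> (complex^'n) \<Rightarrow> complex" where
  "hol_quad Fxx Fxxi Fxixi \<rho> =
     (bil (fst \<rho>) (Fxx *v fst \<rho>) + 2 * bil (fst \<rho>) (Fxxi *v snd \<rho>)
      + bil (snd \<rho>) (Fxixi *v snd \<rho>)) / 2"

text \<open>Action of the fundamental matrix
  [[F''_xi x, F''_xi xi], [-F''_xx, -F''_x xi]] on (x, xi).\<close>
definition fundamental_map ::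
  "complex^'n^'n \<Rightarrow> complex^'n^'n \<Rightarrow> complex^'n^'n \<Rightarrow> (complex^'n) \<times> (complex^'n) \<Rightarrow> (complex^'n) \<times> (complex^'n)" where
  "fundamental_map Fxx Fxxi Fxixi \<rho> =
     (transpose Fxxi *v fst \<rho> + Fxixi *v snd \<rho>, - (Fxx *v fst \<rho>) - Fxxi *v snd \<rho>)"

text \<open>A real quadratic form on C^n, written Phi(x) = Re(x.A x) + sum_{ij} H_ij x_i conj(x_j)
  (A symmetric, H Hermitian); it is strictly plurisubharmonic iff its Levi form H is
  positive definite.\<close>
definition spsh_quadratic :: "(complex^'n \<Rightarrow> real) \<Rightarrow> bool" where
  "spsh_quadratic \<Phi> \<longleftrightarrow>
     (\<exists>A H :: complex^'n^'n.
        transpose A = A \<and> (\<forall>i j. H$i$j = cnj (H$j$i)) \<and>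
        (\<forall>x. \<Phi> x = Re (bil x (A *v x)) + Re (\<Sum>i\<in>UNIV. \<Sum>j\<in>UNIV. H$i$j * x$i * cnj (x$j))) \<and>
        (\<forall>w. w \<noteq> 0 \<longrightarrow> Re (\<Sum>i\<in>UNIV. \<Sum>j\<in>UNIV. H$i$j * w$i * cnj (w$j)) > 0))"

definition wirtinger_dx :: "(complex^'n \<Rightarrow> real) \<Rightarrow> complex^'n \<Rightarrow> complex^'n" where
  "wirtinger_dx \<Phi> x = (\<chi> k.
     (complex_of_real (deriv (\<lambda>t. \<Phi> (x + axis k (complex_of_real t))) 0)
      - \<i> * complex_of_real (deriv (\<lambda>t. \<Phi> (x + axis k (\<i> * complex_of_real t))) 0)) / 2)"

definition Lambda :: "(complex^'n \<Rightarrow> real) \<Rightarrow> ((complex^'n) \<times> (complex^'n)) set" where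
  "Lambda \<Phi> = {(x, \<chi> k. (2 / \<i>) * (wirtinger_dx \<Phi> x $ k)) | x. True}"

end

theory Submission
  imports Defs
begin

text \<open>
  The Lagrangian \<open>\<Lambda>\<^sub>\<Phi>\<^sub>0\<close> is I-Lagrangian: a real subspace equal to its own orthogonal for
  \<open>Im \<sigma>\<close>, \<sigma> the complex symplectic form. The quadratic form is recovered from its Hamilton
  map as \<open>F(\<rho>) = -\<sigma>(\<F>\<rho>, \<rho>)/2\<close>, and \<open>(1 - \<F>/2)\<rho>\<close>, \<open>(1 + \<F>/2)\<rho>\<close> both lie in
  \<open>\<Lambda>\<^sub>\<Phi>\<^sub>0\<close> iff \<open>\<rho>\<close> and \<open>\<F>\<rho>\<close> do. If so, \<open>Im F(\<rho>) = 0\<close> by isotropy. Conversely, if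
  \<open>\<rho> \<in> \<Lambda>\<^sub>\<Phi>\<^sub>0\<close> and \<open>Im F(\<rho>) = 0\<close>, then \<open>\<rho>\<close> minimises \<open>Im F \<ge> 0\<close> on \<open>\<Lambda>\<^sub>\<Phi>\<^sub>0\<close>, so the
  differential \<open>-Im \<sigma>(\<F>\<rho>, \<cdot>)\<close> vanishes there and \<open>\<F>\<rho> \<in> \<Lambda>\<^sub>\<Phi>\<^sub>0\<close> by maximality.
\<close>

lemma bil_commute: "bil x y = bil y x"
  by (simp add: bil_def mult.commute)

lemma bil_add_left: "bil (x + y) z = bil x z + bil y z"
  by (simp add: bil_def distrib_right sum.distrib)

lemma bil_add_right: "bil x (y + z) = bil x y + bil x z"
  by (simp add: bil_def distrib_left sum.distrib)

lemma bil_diff_left: "bil (x - y) z = bil x z - bil y z"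
  by (simp add: bil_def left_diff_distrib sum_subtractf)

lemma bil_minus_left: "bil (- x) y = - bil x y"
  by (simp add: bil_def sum_negf)

lemma bil_scaleR_left: "bil (t *\<^sub>R x) y = of_real t * bil x y"
  unfolding bil_def vector_scaleR_component by (simp add: scaleR_conv_of_real sum_distrib_left mult.assoc)

lemma bil_scaleR_right: "bil x (t *\<^sub>R y) = of_real t * bil x y"
  unfolding bil_def vector_scaleR_component by (simp add: scaleR_conv_of_real sum_distrib_left mult_ac)

lemma bil_vector_scalar_mult_left: "bil (c *s x) y = c * bil x y"
  by (simp add: bil_def sum_distrib_left mult.assoc)

lemma bil_axis_left: "bil (axis k c) y = c * y$k"
proof -
  have "bil (axis k c) y = (\<Sum>i\<in>UNIV. if i = k then c * y$i else 0)"
    unfolding bil_def by (intro sum.cong) (auto simp: axis_def)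
  then show ?thesis by simp
qed

lemma bil_matrix_vector: "bil x (M *v y) = bil (transpose M *v x) y"
proof -
  have "bil x (M *v y) = (\<Sum>i\<in>UNIV. \<Sum>j\<in>UNIV. x$i * M$i$j * y$j)"
    by (simp add: bil_def matrix_vector_mult_def sum_distrib_left mult.assoc)
  also have "\<dots> = (\<Sum>j\<in>UNIV. \<Sum>i\<in>UNIV. x$i * M$i$j * y$j)"
    by (rule sum.swap)
  also have "\<dots> = bil (transpose M *v x) y"
    by (simp add: bil_def vector_matrix_mult_def sum_distrib_right)
  finally show ?thesis .
qed

lemma bil_symmetric_matrix: "transpose M = M \<Longrightarrow> bil x (M *v y) = bil y (M *v x)"
  by (metis bil_matrix_vector bil_commute)

definition vec_cnj :: "complex^'n \<Rightarrow> complex^'n" where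
  "vec_cnj x = (\<chi> i. cnj (x$i))"

lemma vec_cnj_add_scaleR: "vec_cnj (x + t *\<^sub>R y) = vec_cnj x + t *\<^sub>R vec_cnj y"
  unfolding vec_cnj_def vec_eq_iff vector_add_component vector_scaleR_component
  by (simp add: scaleR_conv_of_real)

definition hermitian :: "complex^'n^'n \<Rightarrow> bool" where
  "hermitian H \<longleftrightarrow> (\<forall>i j. H$i$j = cnj (H$j$i))"

lemma cnj_hermitian: "hermitian H \<Longrightarrow> cnj (H$i$j) = H$j$i"
  by (metis hermitian_def complex_cnj_cnj)

lemma bil_hermitian:
  assumes "hermitian H"
  shows "bil x (H *v vec_cnj y) = cnj (bil y (H *v vec_cnj x))"
proof -
  have "cnj (bil y (H *v vec_cnj x)) = (\<Sum>i\<in>UNIV. \<Sum>j\<in>UNIV. cnj (y$i) * H$j$i * x$j)"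
    using assms by (simp add: cnj_hermitian bil_def matrix_vector_mult_def vec_cnj_def sum_distrib_left mult.assoc)
  also have "\<dots> = (\<Sum>j\<in>UNIV. \<Sum>i\<in>UNIV. cnj (y$i) * H$j$i * x$j)"
    by (rule sum.swap)
  also have "\<dots> = bil x (H *v vec_cnj y)"
    by (simp add: bil_def matrix_vector_mult_def vec_cnj_def sum_distrib_left mult_ac)
  finally show ?thesis ..
qed

definition holomorphic_gradient :: "complex^'n^'n \<Rightarrow> complex^'n^'n \<Rightarrow> complex^'n \<Rightarrow> complex^'n" where
  "holomorphic_gradient A H x = A *v x + H *v vec_cnj x"

lemma spsh_quadraticE:
  fixes \<Phi> :: "complex^'n \<Rightarrow> real"
  assumes "spsh_quadratic \<Phi>"
  obtains A H where "transpose A = A" "hermitian H"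
    "\<And>x. \<Phi> x = Re (bil x (holomorphic_gradient A H x))"
proof -
  obtain A H :: "complex^'n^'n" where "transpose A = A" "hermitian H"
    and \<Phi>: "\<And>x. \<Phi> x = Re (bil x (A *v x)) + Re (\<Sum>i\<in>UNIV. \<Sum>j\<in>UNIV. H$i$j * x$i * cnj (x$j))"
    using assms unfolding spsh_quadratic_def hermitian_def by blast
  moreover have "(\<Sum>i\<in>UNIV. \<Sum>j\<in>UNIV. H$i$j * x$i * cnj (x$j)) = bil x (H *v vec_cnj x)" for x
    by (simp add: bil_def matrix_vector_mult_def vec_cnj_def sum_distrib_left mult_ac)
  ultimately show ?thesis
    by (intro that) (simp_all only: holomorphic_gradient_def bil_add_right plus_complex.sel)
qed

lemma holomorphic_gradient_add_scaleR:
  "holomorphic_gradient A H (x + t *\<^sub>R w) = holomorphic_gradient A H x + t *\<^sub>R holomorphic_gradient A H w"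
  by (simp add: holomorphic_gradient_def vec_cnj_add_scaleR linear_scale[OF matrix_vector_mul_linear]
      algebra_simps)

lemma Re_bil_holomorphic_gradient_commute:
  assumes "transpose A = A" "hermitian H"
  shows "Re (bil x (holomorphic_gradient A H w)) = Re (bil w (holomorphic_gradient A H x))"
  using bil_symmetric_matrix[OF assms(1), of x w] bil_hermitian[OF assms(2), of x w]
  by (simp add: holomorphic_gradient_def bil_add_right)

lemma quadratic_form_add_scaleR:
  assumes "transpose A = A" "hermitian H"
  shows "Re (bil (x + t *\<^sub>R w) (holomorphic_gradient A H (x + t *\<^sub>R w)))
    = Re (bil x (holomorphic_gradient A H x)) + t * (2 * Re (bil w (holomorphic_gradient A H x)))
      + t\<^sup>2 * Re (bil w (holomorphic_gradient A H w))"
proof -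
  let ?g = "holomorphic_gradient A H"
  have "bil (x + t *\<^sub>R w) (?g (x + t *\<^sub>R w))
      = bil x (?g x) + of_real t * (bil x (?g w) + bil w (?g x)) + of_real (t\<^sup>2) * bil w (?g w)"
    by (simp add: holomorphic_gradient_add_scaleR bil_add_left bil_add_right bil_scaleR_left
        bil_scaleR_right power2_eq_square distrib_left mult.assoc)
  then show ?thesis
    using Re_bil_holomorphic_gradient_commute[OF assms, of x w] by simp
qed

lemma deriv_quadratic_at_0: "deriv (\<lambda>t::real. a + t * b + t\<^sup>2 * c) 0 = b"
  by (rule DERIV_imp_deriv) (auto intro!: derivative_eq_intros)

lemma wirtinger_dx_quadratic_form:
  assumes "transpose A = A" "hermitian H" and \<Phi>: "\<And>x. \<Phi> x = Re (bil x (holomorphic_gradient A H x))"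
  shows "wirtinger_dx \<Phi> x = holomorphic_gradient A H x"
proof -
  have directional: "deriv (\<lambda>t. \<Phi> (x + t *\<^sub>R w)) 0 = 2 * Re (bil w (holomorphic_gradient A H x))" for w
    unfolding \<Phi> quadratic_form_add_scaleR[OF assms(1,2)] by (rule deriv_quadratic_at_0)
  have axis_real: "axis k (complex_of_real t) = t *\<^sub>R axis k 1"
    and axis_imag: "axis k (\<i> * complex_of_real t) = t *\<^sub>R axis k \<i>" for k :: "'n::finite" and t
    unfolding vec_eq_iff vector_scaleR_component by (simp_all add: axis_def scaleR_conv_of_real)
  show ?thesis
    unfolding wirtinger_dx_def axis_real axis_imag directional
    by (simp add: vec_eq_iff bil_axis_left complex_eq_iff)
qed

lemma Lambda_quadratic_form:
  assumes "transpose A = A" "hermitian H" and "\<And>x. \<Phi> x = Re (bil x (holomorphic_gradient A H x))"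
  shows "Lambda \<Phi> = range (\<lambda>x. (x, (2 / \<i>) *s holomorphic_gradient A H x))"
  unfolding Lambda_def wirtinger_dx_quadratic_form[OF assms] vector_scalar_mult_def by auto

definition symplectic_form ::
  "((complex^'n) \<times> (complex^'n)) \<Rightarrow> ((complex^'n) \<times> (complex^'n)) \<Rightarrow> complex" where
  "symplectic_form u v = bil (snd u) (fst v) - bil (fst u) (snd v)"

lemma symplectic_form_zero_left: "symplectic_form 0 v = 0"
  by (simp add: symplectic_form_def bil_def)

lemma symplectic_form_add_left: "symplectic_form (u + w) v = symplectic_form u v + symplectic_form w v"
  by (simp add: symplectic_form_def bil_add_left)

lemma symplectic_form_scaleR_left: "symplectic_form (c *\<^sub>R u) v = of_real c * symplectic_form u v"
  by (simp add: symplectic_form_def bil_scaleR_left right_diff_distrib)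

lemma symplectic_form_add_right: "symplectic_form u (v + w) = symplectic_form u v + symplectic_form u w"
  by (simp add: symplectic_form_def bil_add_right)

lemma symplectic_form_scaleR_right: "symplectic_form u (c *\<^sub>R v) = of_real c * symplectic_form u v"
  by (simp add: symplectic_form_def bil_scaleR_right right_diff_distrib)

text \<open>
  Since \<open>Im \<sigma>\<close> is a nondegenerate real symplectic form, the maximal isotropic (I-Lagrangian)
  subspaces are exactly the sets that coincide with their \<open>Im \<sigma>\<close>-orthogonal.
\<close>
definition I_Lagrangian :: "((complex^'n) \<times> (complex^'n)) set \<Rightarrow> bool" where
  "I_Lagrangian L \<longleftrightarrow> L = {u. \<forall>v\<in>L. Im (symplectic_form u v) = 0}"

lemma I_Lagrangian_mem_iff:
  assumes "I_Lagrangian L"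
  shows "u \<in> L \<longleftrightarrow> (\<forall>v\<in>L. Im (symplectic_form u v) = 0)"
proof -
  have "u \<in> L \<longleftrightarrow> u \<in> {u. \<forall>v\<in>L. Im (symplectic_form u v) = 0}"
    using assms unfolding I_Lagrangian_def by (rule arg_cong[where f = "\<lambda>S. u \<in> S"])
  then show ?thesis
    by (simp only: mem_Collect_eq)
qed

lemma subspace_Im_symplectic_orthogonal: "subspace {u. \<forall>v\<in>S. Im (symplectic_form u v) = 0}"
  by (simp add: subspace_def symplectic_form_zero_left symplectic_form_add_left
      symplectic_form_scaleR_left)

lemma I_Lagrangian_subspace: "I_Lagrangian L \<Longrightarrow> subspace L"
  unfolding I_Lagrangian_def by (erule ssubst) (rule subspace_Im_symplectic_orthogonal)

lemma I_Lagrangian_graph_holomorphic_gradient: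
  fixes A H :: "complex^'n^'n"
  assumes "transpose A = A" "hermitian H"
  shows "I_Lagrangian (range (\<lambda>x. (x, (2 / \<i>) *s holomorphic_gradient A H x)))"
proof -
  let ?l = "\<lambda>x. (2 / \<i>) *s holomorphic_gradient A H x"
  have isotropic: "Im (symplectic_form (x, ?l x) (y, ?l y)) = 0" for x y
  proof -
    let ?g = "holomorphic_gradient A H"
    have "symplectic_form (x, ?l x) (y, ?l y) = (2 / \<i>) * (bil y (?g x) - bil x (?g y))"
      unfolding symplectic_form_def fst_conv snd_conv bil_commute[of x "?l y"]
        bil_vector_scalar_mult_left bil_commute[of "?g x" y] bil_commute[of "?g y" x]
      by (simp only: right_diff_distrib)
    then show ?thesis
      using Re_bil_holomorphic_gradient_commute[OF assms, of y x] by simp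
  qed
  have maximal: "u \<in> range (\<lambda>x. (x, ?l x))"
    if "\<forall>v \<in> range (\<lambda>x. (x, ?l x)). Im (symplectic_form u v) = 0" for u
  proof -
    obtain y \<eta> where u: "u = (y, \<eta>)" by fastforce
    define v where "v = \<eta> - ?l y"
    have Im_bil_v: "Im (bil v x) = 0" for x
    proof -
      have "bil v x = symplectic_form u (x, ?l x) - symplectic_form (y, ?l y) (x, ?l x)"
        by (simp add: u v_def symplectic_form_def bil_diff_left bil_add_left bil_minus_left)
      then show ?thesis
        using that isotropic by simp
    qed
    have "v$k = 0" for k
    proof -
      have "Im (bil (axis k 1) v) = 0" "Im (bil (axis k \<i>) v) = 0"
        using Im_bil_v bil_commute by metis+
      then show ?thesis
        by (simp add: bil_axis_left complex_eq_iff)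
    qed
    then have "v = 0"
      by (simp add: vec_eq_iff)
    then have "\<eta> = ?l y"
      unfolding v_def by (rule right_minus_eq[THEN iffD1])
    then show ?thesis
      unfolding u by (intro image_eqI) auto
  qed
  show ?thesis
    unfolding I_Lagrangian_def
  proof (intro equalityI subsetI CollectI ballI)
    fix u v
    assume "u \<in> range (\<lambda>x. (x, ?l x))" and "v \<in> range (\<lambda>x. (x, ?l x))"
    then show "Im (symplectic_form u v) = 0"
      using isotropic by auto
  qed (use maximal in blast)
qed

lemma I_Lagrangian_Lambda:
  fixes \<Phi> :: "complex^'n \<Rightarrow> real"
  assumes "spsh_quadratic \<Phi>"
  shows "I_Lagrangian (Lambda \<Phi>)"
proof -
  obtain A H :: "complex^'n^'n" where A: "transpose A = A" and H: "hermitian H"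
    and \<Phi>: "\<And>x. \<Phi> x = Re (bil x (holomorphic_gradient A H x))"
    using spsh_quadraticE[OF assms] by blast
  show ?thesis
    unfolding Lambda_quadratic_form[OF A H \<Phi>] by (rule I_Lagrangian_graph_holomorphic_gradient[OF A H])
qed

lemma fundamental_map_add_scaleR:
  "fundamental_map Fxx Fxxi Fxixi (\<rho> + s *\<^sub>R \<tau>)
    = fundamental_map Fxx Fxxi Fxixi \<rho> + s *\<^sub>R fundamental_map Fxx Fxxi Fxixi \<tau>"
  by (simp add: fundamental_map_def linear_scale[OF matrix_vector_mul_linear] algebra_simps
      del: transpose_matrix_vector)

lemma symplectic_form_fundamental_map_commute:
  assumes "transpose Fxx = Fxx" "transpose Fxixi = Fxixi"
  shows "symplectic_form (fundamental_map Fxx Fxxi Fxixi \<rho>) \<tau>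
    = symplectic_form (fundamental_map Fxx Fxxi Fxixi \<tau>) \<rho>"
proof -
  obtain x \<xi> where \<rho>: "\<rho> = (x, \<xi>)" by fastforce
  obtain y \<eta> where \<tau>: "\<tau> = (y, \<eta>)" by fastforce
  have "bil (Fxx *v x) y = bil (Fxx *v y) x" "bil (Fxixi *v \<xi>) \<eta> = bil (Fxixi *v \<eta>) \<xi>"
    "bil (Fxxi *v \<xi>) y = bil (transpose Fxxi *v y) \<xi>" "bil (transpose Fxxi *v x) \<eta> = bil (Fxxi *v \<eta>) x"
    using bil_matrix_vector bil_commute assms by metis+
  then show ?thesis
    unfolding \<rho> \<tau> fundamental_map_def symplectic_form_def
    by (simp add: bil_add_left bil_diff_left bil_minus_left algebra_simps del: transpose_matrix_vector)
qed

lemma hol_quad_eq_symplectic_form: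
  "hol_quad Fxx Fxxi Fxixi \<rho> = - symplectic_form (fundamental_map Fxx Fxxi Fxixi \<rho>) \<rho> / 2"
proof -
  obtain x \<xi> where \<rho>: "\<rho> = (x, \<xi>)" by fastforce
  have "bil (Fxx *v x) x = bil x (Fxx *v x)" "bil (Fxixi *v \<xi>) \<xi> = bil \<xi> (Fxixi *v \<xi>)"
    "bil (Fxxi *v \<xi>) x = bil x (Fxxi *v \<xi>)" "bil (transpose Fxxi *v x) \<xi> = bil x (Fxxi *v \<xi>)"
    using bil_matrix_vector bil_commute by metis+
  then show ?thesis
    unfolding \<rho> hol_quad_def fundamental_map_def symplectic_form_def
    by (simp add: bil_add_left bil_diff_left bil_minus_left algebra_simps del: transpose_matrix_vector)
qed

lemma hol_quad_add_scaleR: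
  assumes "transpose Fxx = Fxx" "transpose Fxixi = Fxixi"
  shows "hol_quad Fxx Fxxi Fxixi (\<rho> + s *\<^sub>R \<tau>) = hol_quad Fxx Fxxi Fxixi \<rho>
    - of_real s * symplectic_form (fundamental_map Fxx Fxxi Fxixi \<rho>) \<tau>
    + of_real (s\<^sup>2) * hol_quad Fxx Fxxi Fxixi \<tau>"
proof -
  let ?F = "fundamental_map Fxx Fxxi Fxixi"
  have "hol_quad Fxx Fxxi Fxixi (\<rho> + s *\<^sub>R \<tau>)
      = - symplectic_form (?F \<rho> + s *\<^sub>R ?F \<tau>) (\<rho> + s *\<^sub>R \<tau>) / 2"
    by (simp add: hol_quad_eq_symplectic_form fundamental_map_add_scaleR)
  also have "\<dots> = - (symplectic_form (?F \<rho>) \<rho> + of_real s * symplectic_form (?F \<rho>) \<tau>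
      + of_real s * symplectic_form (?F \<tau>) \<rho> + of_real (s\<^sup>2) * symplectic_form (?F \<tau>) \<tau>) / 2"
    by (simp add: symplectic_form_add_left symplectic_form_add_right symplectic_form_scaleR_left
        symplectic_form_scaleR_right power2_eq_square algebra_simps)
  also have "\<dots> = hol_quad Fxx Fxxi Fxixi \<rho> - of_real s * symplectic_form (?F \<rho>) \<tau>
      + of_real (s\<^sup>2) * hol_quad Fxx Fxxi Fxixi \<tau>"
    unfolding hol_quad_eq_symplectic_form symplectic_form_fundamental_map_commute[OF assms, of Fxxi \<tau> \<rho>]
    by (simp add: field_simps)
  finally show ?thesis .
qed

lemma linear_coeff_eq_0_if_quadratic_nonneg:
  fixes b c :: real
  assumes nonneg: "\<And>s. 0 \<le> s * b + s\<^sup>2 * c"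
  shows "b = 0"
proof (rule ccontr)
  assume "b \<noteq> 0"
  define e where "e = \<bar>c\<bar> + 1"
  define s where "s = - b / e"
  have "e > 0" by (simp add: e_def add_pos_nonneg)
  have "s * b + s\<^sup>2 * c \<le> s * b + s\<^sup>2 * (e - 1)"
    unfolding e_def by (intro add_left_mono mult_left_mono) auto
  also have "\<dots> = - (b / e)\<^sup>2"
    using \<open>e > 0\<close> by (simp add: s_def field_simps power2_eq_square)
  also have "\<dots> < 0"
    using \<open>b \<noteq> 0\<close> \<open>e > 0\<close> by simp
  finally show False
    using nonneg[of s] by simp
qed

lemma fundamental_map_mem_I_Lagrangian:
  assumes L: "I_Lagrangian L" and F: "transpose Fxx = Fxx" "transpose Fxixi = Fxixi"
    and nonneg: "\<forall>\<rho>\<in>L. 0 \<le> Im (hol_quad Fxx Fxxi Fxixi \<rho>)"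
    and "\<rho> \<in> L" and "Im (hol_quad Fxx Fxxi Fxixi \<rho>) = 0"
  shows "fundamental_map Fxx Fxxi Fxixi \<rho> \<in> L"
  unfolding I_Lagrangian_mem_iff[OF L]
proof
  fix \<tau> assume "\<tau> \<in> L"
  let ?a = "Im (symplectic_form (fundamental_map Fxx Fxxi Fxixi \<rho>) \<tau>)"
  have "0 \<le> s * (- ?a) + s\<^sup>2 * Im (hol_quad Fxx Fxxi Fxixi \<tau>)" for s
  proof -
    have "\<rho> + s *\<^sub>R \<tau> \<in> L"
      using I_Lagrangian_subspace[OF L] \<open>\<rho> \<in> L\<close> \<open>\<tau> \<in> L\<close> by (simp add: subspace_add subspace_scale)
    then have "0 \<le> Im (hol_quad Fxx Fxxi Fxixi (\<rho> + s *\<^sub>R \<tau>))"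
      using nonneg by blast
    also have "\<dots> = s * (- ?a) + s\<^sup>2 * Im (hol_quad Fxx Fxxi Fxixi \<tau>)"
      using \<open>Im (hol_quad Fxx Fxxi Fxixi \<rho>) = 0\<close> by (simp add: hol_quad_add_scaleR[OF F])
    finally show ?thesis .
  qed
  then have "- ?a = 0"
    by (rule linear_coeff_eq_0_if_quadratic_nonneg)
  then show "?a = 0" by simp
qed

lemma Im_hol_quad_eq_0_if_fundamental_map_mem:
  assumes "I_Lagrangian L" and "\<rho> \<in> L" and "fundamental_map Fxx Fxxi Fxixi \<rho> \<in> L"
  shows "Im (hol_quad Fxx Fxxi Fxixi \<rho>) = 0"
  using assms by (simp add: hol_quad_eq_symplectic_form I_Lagrangian_mem_iff)

lemma subspace_diff_add_half_iff:
  assumes "subspace L"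
  shows "a - (1/2) *\<^sub>R b \<in> L \<and> a + (1/2) *\<^sub>R b \<in> L \<longleftrightarrow> a \<in> L \<and> b \<in> L"
proof
  assume *: "a - (1/2) *\<^sub>R b \<in> L \<and> a + (1/2) *\<^sub>R b \<in> L"
  have "a = (1/2) *\<^sub>R ((a - (1/2) *\<^sub>R b) + (a + (1/2) *\<^sub>R b))"
    and "b = (a + (1/2) *\<^sub>R b) - (a - (1/2) *\<^sub>R b)"
    by (simp_all add: algebra_simps flip: scaleR_2)
  then show "a \<in> L \<and> b \<in> L"
    using * assms by (metis subspace_add subspace_diff subspace_scale)
qed (use assms in \<open>simp add: subspace_add subspace_diff subspace_scale\<close>)

lemma Cayley_transform_image_inter_I_Lagrangian:
  assumes L: "I_Lagrangian L" and F: "transpose Fxx = Fxx" "transpose Fxixi = Fxixi"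
    and nonneg: "\<forall>\<rho>\<in>L. 0 \<le> Im (hol_quad Fxx Fxxi Fxixi \<rho>)"
  shows "{\<rho> - (1/2) *\<^sub>R fundamental_map Fxx Fxxi Fxixi \<rho> | \<rho>.
            \<rho> + (1/2) *\<^sub>R fundamental_map Fxx Fxxi Fxixi \<rho> \<in> L} \<inter> L
       = {\<rho> - (1/2) *\<^sub>R fundamental_map Fxx Fxxi Fxixi \<rho> | \<rho>.
            \<rho> \<in> L \<and> Im (hol_quad Fxx Fxxi Fxixi \<rho>) = 0}"
proof -
  have "\<rho> - (1/2) *\<^sub>R fundamental_map Fxx Fxxi Fxixi \<rho> \<in> L
      \<and> \<rho> + (1/2) *\<^sub>R fundamental_map Fxx Fxxi Fxixi \<rho> \<in> L
      \<longleftrightarrow> \<rho> \<in> L \<and> Im (hol_quad Fxx Fxxi Fxixi \<rho>) = 0" for \<rho>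
    using subspace_diff_add_half_iff[OF I_Lagrangian_subspace[OF L]]
      fundamental_map_mem_I_Lagrangian[OF L F nonneg] Im_hol_quad_eq_0_if_fundamental_map_mem[OF L]
    by blast
  then show ?thesis by blast
qed

theorem proposition2p3:
  fixes \<Phi>0 \<Phi> :: "complex^'n \<Rightarrow> real" and Fxx Fxxi Fxixi :: "complex^'n^'n"
  defines "F \<equiv> hol_quad Fxx Fxxi Fxixi"
    and "\<F> \<equiv> fundamental_map Fxx Fxxi Fxixi"
  assumes "spsh_quadratic \<Phi>0"
    and "transpose Fxx = Fxx" and "transpose Fxixi = Fxixi"
    and "\<forall>\<rho>. \<F> \<rho> = 2 *\<^sub>R \<rho> \<longrightarrow> \<rho> = 0"
    and "\<forall>\<rho>. \<F> \<rho> = (-2) *\<^sub>R \<rho> \<longrightarrow> \<rho> = 0"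
    and "\<forall>\<rho>\<in>Lambda \<Phi>0. Im (F \<rho>) \<ge> 0"
    and "spsh_quadratic \<Phi>"
    and "{\<rho> - (1/2) *\<^sub>R \<F> \<rho> | \<rho>. \<rho> + (1/2) *\<^sub>R \<F> \<rho> \<in> Lambda \<Phi>0} = Lambda \<Phi>"
  shows "Lambda \<Phi> \<inter> Lambda \<Phi>0 = {\<rho> - (1/2) *\<^sub>R \<F> \<rho> | \<rho>. \<rho> \<in> Lambda \<Phi>0 \<and> Im (F \<rho>) = 0}"
proof -
  \<comment> \<open>The eigenvalue conditions and \<open>spsh_quadratic \<Phi>\<close> only make \<open>\<kappa>\<^sub>F\<close> well defined with
    image \<open>\<Lambda>\<^sub>\<Phi>\<close>; that identity is assumed here.\<close>
  have L: "I_Lagrangian (Lambda \<Phi>0)"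
    using \<open>spsh_quadratic \<Phi>0\<close> by (rule I_Lagrangian_Lambda)
  have nonneg: "\<forall>\<rho>\<in>Lambda \<Phi>0. 0 \<le> Im (hol_quad Fxx Fxxi Fxixi \<rho>)"
    using assms(8) unfolding F_def .
  have image: "{\<rho> - (1/2) *\<^sub>R fundamental_map Fxx Fxxi Fxixi \<rho> | \<rho>.
      \<rho> + (1/2) *\<^sub>R fundamental_map Fxx Fxxi Fxixi \<rho> \<in> Lambda \<Phi>0} = Lambda \<Phi>"
    using assms(10) unfolding \<F>_def .
  show ?thesis
    unfolding F_def \<F>_def image[symmetric]
    by (rule Cayley_transform_image_inter_I_Lagrangian[OF L assms(4,5) nonneg])
qed

end
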